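(* Let $0<R\le\infty$ and let $\psi$ be a quasiconcave function on $[0,R)$. Then: (i) there is $C>0$ such that $(T_\psi f)^{**}(t)\le C\bigl(T_\psi f(t)+f^{**}(t)\bigr)$ for all measurable $f$ on $(0,R)$ and all $t\in(0,R)$ if and only if $\psi$ satisfies the $B$-condition; (ii) there are constants $0<c\le C$ such that $c\bigl(T_\psi f(t)+f^{**}(t)\bigr)\le T_\psi(f^{**})(t)\le C\bigl(T_\psi f(t)+f^{**}(t)\bigr)$ for all measurable $f$ on $(0,R)$ and all $t\in(0,R)$ if and only if $\psi$ satisfies the $B$-condition.
   Context: For a measurable a.e. finite function $f$ on $(0,R)$, $f^*$ is its non-increasing rearrangement, $f^*(t)=\inf\{\lambda>0: |\{x:|f(x)|>\lambda\}|\le t\}$, and $f^{**}(t)=\frac1t\int_0^t f^*(s)\,ds$. A function $\psi\colon[0,R)\to[0,\infty)$ is quasiconcave if $\psi(t)=0$ iff $t=0$, $\psi$ is non-decreasing, and $\psi(t)/t$ is non-increasing on $(0,R)$. It satisfies the $B$-condition if there is $C>0$ with $\frac1t\int_0^t \frac{ds}{\psi(s)}\le \frac{C}{\psi(t)}$ for all $t\in(0,R)$. $T_\psi f(t)=\frac{1}{\psi(t)}\sup_{t<s<R}\psi(s)f^*(s)$, $t\in(0,R)$; $T_\psi(f^{**})$ is $T_\psi$ applied to the function $f^{**}$. *)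

theory Defs
  imports "HOL-Analysis.Analysis"
begin

text \<open>The interval (0,R), with 0 < R \<le> \<infinity> encoded as an extended real.\<close>
definition Ioo0 :: "ereal \<Rightarrow> real set" where
  "Ioo0 R = {x. 0 < x \<and> ereal x < R}"

text \<open>Non-increasing rearrangement (on (0,R)) of a function with values in [0,\<infinity>];
  for a real function f one uses g = |f|. Inf of the empty set is \<infinity>.\<close>
definition rearr :: "ereal \<Rightarrow> (real \<Rightarrow> ennreal) \<Rightarrow> real \<Rightarrow> ennreal" where
  "rearr R g t = Inf {ennreal l | l. l > 0 \<and>
      emeasure lebesgue {x \<in> Ioo0 R. g x > ennreal l} \<le> ennreal t}"

definition dstar :: "ereal \<Rightarrow> (real \<Rightarrow> ennreal) \<Rightarrow> real \<Rightarrow> ennreal" where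
  "dstar R g t = (\<integral>\<^sup>+ s\<in>{0<..<t}. rearr R g s \<partial>lborel) / ennreal t"

definition Tpsi :: "ereal \<Rightarrow> (real \<Rightarrow> real) \<Rightarrow> (real \<Rightarrow> ennreal) \<Rightarrow> real \<Rightarrow> ennreal" where
  "Tpsi R \<psi> g t = (SUP s\<in>{s. t < s \<and> ereal s < R}. ennreal (\<psi> s) * rearr R g s) / ennreal (\<psi> t)"

definition quasiconcave :: "ereal \<Rightarrow> (real \<Rightarrow> real) \<Rightarrow> bool" where
  "quasiconcave R \<psi> \<longleftrightarrow>
     (\<forall>t. 0 \<le> t \<and> ereal t < R \<longrightarrow> 0 \<le> \<psi> t \<and> (\<psi> t = 0 \<longleftrightarrow> t = 0)) \<and>
     (\<forall>s t. 0 \<le> s \<and> s \<le> t \<and> ereal t < R \<longrightarrow> \<psi> s \<le> \<psi> t) \<and>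
     (\<forall>s t. 0 < s \<and> s \<le> t \<and> ereal t < R \<longrightarrow> \<psi> t / t \<le> \<psi> s / s)"

definition B_condition :: "ereal \<Rightarrow> (real \<Rightarrow> real) \<Rightarrow> bool" where
  "B_condition R \<psi> \<longleftrightarrow> (\<exists>C>0. \<forall>t \<in> Ioo0 R.
     (\<integral>\<^sup>+ s\<in>{0<..<t}. ennreal (1 / \<psi> s) \<partial>lborel) / ennreal t \<le> ennreal (C / \<psi> t))"

end

theory Submission
  imports Defs
begin

text \<open>Write \<open>H(t) = sup\<^sub>s\<^sub>>\<^sub>t \<psi>(s) f*(s)\<close>, so that \<open>T\<^sub>\<psi> f(t) = H(t)/\<psi>(t)\<close>, and
  \<open>G(t) = \<integral>\<^sub>0\<^sup>t ds/\<psi>(s)\<close>; the B-condition says \<open>G(t) \<le> K t/\<psi>(t)\<close>.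
  For \<open>u > t\<close>, splitting \<open>\<integral>\<^sub>0\<^sup>u f*\<close> at \<open>t\<close> and using \<open>f* \<le> H(t)/\<psi>\<close> on \<open>(t,u)\<close> gives
  \<open>\<psi>(u) f**(u) \<le> \<psi>(t) f**(t) + H(t) \<psi>(u) G(u)/u \<le> \<psi>(t) f**(t) + K H(t)\<close>: the upper estimate of (ii).
  For (i), on \<open>(0,t)\<close> one has \<open>\<psi>(s) T\<^sub>\<psi> f(s) \<le> H(t) + 2\<integral>\<^sub>s\<^sub>/\<^sub>2\<^sup>t \<psi>(v) f*(v) dv/v\<close>; integrating
  against \<open>ds/\<psi>(s)\<close> and exchanging the order of integration, the B-condition at \<open>2v\<close> turns the
  second term into \<open>4K \<integral>\<^sub>0\<^sup>t f*\<close>. The lower estimate of (ii) only uses \<open>\<psi>(2s) \<le> 2\<psi>(s)\<close>.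
  Conversely, testing (i) on the indicator of \<open>(0,b)\<close>, and (ii) on \<open>1/\<psi>(max x t)\<close> restricted
  to \<open>(0,a)\<close> with \<open>t \<rightarrow> 0\<close>, bounds \<open>G(b/4)\<close> by a multiple of \<open>b/\<psi>(b)\<close>, respectively \<open>G(a/2)\<close> by
  a multiple of \<open>a/\<psi>(a)\<close>; quasiconcavity bounds the rest of \<open>G\<close>.\<close>

lemma ennreal_divide_eq_mult_inverse: "0 < c \<Longrightarrow> x / ennreal c = x * ennreal (1 / c)"
  by (simp add: divide_ennreal_def inverse_ennreal inverse_eq_divide)

lemma ennreal_divide_le_iff: "0 < c \<Longrightarrow> x / ennreal c \<le> y \<longleftrightarrow> x \<le> y * ennreal c"
  by (cases x; cases y)
    (auto simp: divide_ennreal ennreal_mult[symmetric] field_simps ennreal_top_mult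
      ennreal_top_divide ennreal_mult_top top_unique)

lemma ennreal_le_divide_iff: "0 < c \<Longrightarrow> y \<le> x / ennreal c \<longleftrightarrow> y * ennreal c \<le> x"
  by (cases x; cases y)
    (auto simp: divide_ennreal ennreal_mult[symmetric] field_simps ennreal_top_mult
      ennreal_top_divide ennreal_mult_top top_unique)

lemma ennreal_mult_divide_cancel_left: "0 < c \<Longrightarrow> ennreal c * x / ennreal c = x"
  by (simp add: ennreal_divide_eq_mult_inverse mult.commute mult.left_commute ennreal_mult[symmetric])

lemma ennreal_divide_mult_cancel: "0 < c \<Longrightarrow> x / ennreal c * ennreal c = x"
  by (cases x) (auto simp: divide_ennreal ennreal_mult[symmetric] ennreal_top_divide ennreal_top_mult)

lemma ereal_le_less_trans: "x \<le> y \<Longrightarrow> ereal y < R \<Longrightarrow> ereal x < R"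
  by (meson ereal_less_eq(3) le_less_trans)

lemma Ioo0_downward_closed: "0 < x \<Longrightarrow> x \<le> y \<Longrightarrow> y \<in> Ioo0 R \<Longrightarrow> x \<in> Ioo0 R"
  by (auto simp: Ioo0_def intro: ereal_le_less_trans)

lemma Ioo0_exists_greater:
  assumes t: "t \<in> Ioo0 R" shows "\<exists>s. t < s \<and> s \<le> 2 * t \<and> ereal s < R"
proof -
  have "ereal t < R" using t by (simp add: Ioo0_def)
  then obtain z where z: "ereal t < ereal z" "ereal z < R" using ereal_dense2 by blast
  have "ereal (min z (2 * t)) < R" by (rule ereal_le_less_trans[of _ z]) (simp_all add: z)
  then show ?thesis using z t by (intro exI[of _ "min z (2 * t)"]) (auto simp: Ioo0_def)
qed

lemma emeasure_lebesgue_Ioo: "a \<le> b \<Longrightarrow> emeasure lebesgue {a<..<b} = ennreal (b - a)"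
  by (simp add: emeasure_completion)

lemma emeasure_lebesgue_Ioc: "a \<le> b \<Longrightarrow> emeasure lebesgue {a<..b} = ennreal (b - a)"
  by (simp add: emeasure_completion)

lemma borel_measurable_restrict_Ioo0:
  "(f :: real \<Rightarrow> real) \<in> borel_measurable borel \<Longrightarrow> f \<in> borel_measurable (restrict_space lebesgue (Ioo0 R))"
  by (intro measurable_restrict_space1 measurable_completion) simp

lemma borel_measurable_antimono_ennreal:
  fixes f :: "real \<Rightarrow> ennreal"
  assumes "\<And>x y. x \<le> y \<Longrightarrow> f y \<le> f x"
  shows "f \<in> borel_measurable borel"
proof (rule borel_measurableI_greater)
  fix c
  have "is_interval {x. c < f x}"
    unfolding is_interval_1
  proof clarify
    fix a b x assume "c < f a" "c < f b" "a \<le> x" "x \<le> b"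
    then show "c < f x" using assms[of x b] by (meson less_le_trans)
  qed
  then show "{x \<in> space borel. c < f x} \<in> sets borel"
    using real_interval_borel_measurable by simp
qed

lemma set_nn_integral_Ioo_split:
  fixes s t :: real
  assumes "(\<lambda>x. h x * indicator {0<..<t} x) \<in> borel_measurable borel" "0 < s" "s \<le> t"
  shows "(\<integral>\<^sup>+ x\<in>{0<..<t}. h x \<partial>lborel) = (\<integral>\<^sup>+ x\<in>{0<..<s}. h x \<partial>lborel) + (\<integral>\<^sup>+ x\<in>{s..<t}. h x \<partial>lborel)"
proof -
  let ?h = "\<lambda>x. h x * indicator {0<..<t} x"
  have "(\<integral>\<^sup>+ x\<in>{0<..<t}. h x \<partial>lborel)
      = (\<integral>\<^sup>+ x. ?h x * indicator {0<..<s} x + ?h x * indicator {s..<t} x \<partial>lborel)"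
    using assms by (intro nn_integral_cong) (auto simp: indicator_def)
  also have "\<dots> = (\<integral>\<^sup>+ x\<in>{0<..<s}. ?h x \<partial>lborel) + (\<integral>\<^sup>+ x\<in>{s..<t}. ?h x \<partial>lborel)"
    using assms by (intro nn_integral_add) auto
  also have "\<dots> = (\<integral>\<^sup>+ x\<in>{0<..<s}. h x \<partial>lborel) + (\<integral>\<^sup>+ x\<in>{s..<t}. h x \<partial>lborel)"
    using assms by (intro arg_cong2[where f = "(+)"] nn_integral_cong) (auto simp: indicator_def)
  finally show ?thesis .
qed

subsection \<open>Rearrangements and their averages\<close>

lemma rearr_antimono:
  assumes "s \<le> t" shows "rearr R g t \<le> rearr R g s"
  unfolding rearr_def
proof (rule Inf_superset_mono, clarify)
  fix l :: real assume "0 < l" "emeasure lebesgue {x \<in> Ioo0 R. ennreal l < g x} \<le> ennreal s"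
  then show "\<exists>l'. ennreal l = ennreal l' \<and> 0 < l' \<and> emeasure lebesgue {x \<in> Ioo0 R. ennreal l' < g x} \<le> ennreal t"
    using order_trans[OF _ ennreal_leI[OF assms]] by blast
qed

lemma borel_measurable_rearr [measurable]: "rearr R g \<in> borel_measurable borel"
  by (rule borel_measurable_antimono_ennreal) (rule rearr_antimono)

lemma sets_lebesgue_superlevel_antimono_on:
  fixes g :: "real \<Rightarrow> 'a :: linorder"
  assumes g: "antimono_on (Ioo0 R) g"
  shows "{x \<in> Ioo0 R. c < g x} \<in> sets lebesgue"
proof -
  have "is_interval {x \<in> Ioo0 R. c < g x}"
    unfolding is_interval_1
  proof (clarify, intro conjI)
    fix a b x assume a: "a \<in> Ioo0 R" and b: "b \<in> Ioo0 R" "c < g b" and "a \<le> x" "x \<le> b"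
    then show x: "x \<in> Ioo0 R" by (intro Ioo0_downward_closed[of x b]) (auto simp: Ioo0_def)
    show "c < g x" using b(2) monotone_onD[OF g x b(1) \<open>x \<le> b\<close>] by (rule less_le_trans)
  qed
  then have "{x \<in> Ioo0 R. c < g x} \<in> sets borel" by (rule real_interval_borel_measurable)
  then show ?thesis by simp
qed

lemma rearr_le_antimono_on:
  assumes g: "antimono_on (Ioo0 R) g" and t: "t \<in> Ioo0 R"
  shows "rearr R g t \<le> g t"
proof (cases "g t = top")
  case False
  show ?thesis
  proof (rule ennreal_le_epsilon)
    fix e :: real assume e: "0 < e"
    define l where "l = enn2real (g t) + e"
    have "g t = ennreal (enn2real (g t))" using False by (simp add: less_top)
    then have gl: "g t + ennreal e = ennreal l"
      using e by (metis l_def ennreal_plus enn2real_nonneg less_imp_le)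
    have l0: "l > 0" using e by (simp add: l_def enn2real_nonneg add_nonneg_pos)
    have sub: "{x \<in> Ioo0 R. g x > ennreal l} \<subseteq> {0<..<t}"
    proof clarify
      fix x assume x: "x \<in> Ioo0 R" "ennreal l < g x"
      show "x \<in> {0<..<t}"
      proof (rule ccontr)
        assume "x \<notin> {0<..<t}"
        with x have "t \<le> x" by (auto simp: Ioo0_def)
        then have "g x \<le> g t" by (rule monotone_onD[OF g t x(1)])
        also have "\<dots> \<le> ennreal l" using gl by (metis le_iff_add)
        finally show False using x(2) by simp
      qed
    qed
    have "emeasure lebesgue {x \<in> Ioo0 R. g x > ennreal l} \<le> emeasure lebesgue {0<..<t}"
      by (rule emeasure_mono[OF sub]) simp
    also have "\<dots> = ennreal t" using t by (simp add: emeasure_lebesgue_Ioo Ioo0_def)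
    finally have "ennreal l \<in> {ennreal l | l. l > 0 \<and>
        emeasure lebesgue {x \<in> Ioo0 R. g x > ennreal l} \<le> ennreal t}"
      using l0 by blast
    then have "rearr R g t \<le> ennreal l" unfolding rearr_def by (rule Inf_lower)
    then show "rearr R g t \<le> g t + ennreal e" using gl by simp
  qed
qed simp

lemma le_rearr_antimono_on:
  assumes g: "antimono_on (Ioo0 R) g" and ts: "t < s" and s: "s \<in> Ioo0 R"
  shows "g s \<le> rearr R g t"
  unfolding rearr_def
proof (rule Inf_greatest, clarify)
  fix l :: real assume m: "emeasure lebesgue {x \<in> Ioo0 R. ennreal l < g x} \<le> ennreal t"
  show "g s \<le> ennreal l"
  proof (rule ccontr)
    assume "\<not> g s \<le> ennreal l"
    moreover have "g s \<le> g x" if "0 < x" "x \<le> s" for x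
      using that s by (intro monotone_onD[OF g _ s]) (auto intro: Ioo0_downward_closed)
    ultimately have sub: "{0<..s} \<subseteq> {x \<in> Ioo0 R. ennreal l < g x}"
      using s by (auto simp: not_le intro: Ioo0_downward_closed less_le_trans)
    have "ennreal s = emeasure lebesgue {0<..s}"
      using s by (simp add: emeasure_lebesgue_Ioc Ioo0_def)
    also have "\<dots> \<le> emeasure lebesgue {x \<in> Ioo0 R. ennreal l < g x}"
      by (rule emeasure_mono[OF sub sets_lebesgue_superlevel_antimono_on[OF g]])
    also note m
    finally show False using s ts by (auto simp: Ioo0_def ennreal_le_iff2)
  qed
qed

definition rearr_integral :: "ereal \<Rightarrow> (real \<Rightarrow> ennreal) \<Rightarrow> real \<Rightarrow> ennreal" where
  "rearr_integral R g t = (\<integral>\<^sup>+ s\<in>{0<..<t}. rearr R g s \<partial>lborel)"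

lemma dstar_eq_rearr_integral: "dstar R g t = rearr_integral R g t / ennreal t"
  by (simp add: dstar_def rearr_integral_def)

lemma rearr_integral_eq_dstar: "0 < t \<Longrightarrow> rearr_integral R g t = dstar R g t * ennreal t"
  by (simp add: dstar_eq_rearr_integral ennreal_divide_mult_cancel)

lemma rearr_integral_mono: "s \<le> t \<Longrightarrow> rearr_integral R g s \<le> rearr_integral R g t"
  unfolding rearr_integral_def by (intro nn_integral_mono) (auto simp: indicator_def)

lemma mult_rearr_le_rearr_integral:
  assumes "0 \<le> t" shows "ennreal t * rearr R g t \<le> rearr_integral R g t"
proof -
  have "ennreal t * rearr R g t = (\<integral>\<^sup>+ s\<in>{0<..<t}. rearr R g t \<partial>lborel)"
    using assms by (simp add: nn_integral_cmult_indicator mult.commute)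
  also have "\<dots> \<le> rearr_integral R g t"
    unfolding rearr_integral_def
    by (intro nn_integral_mono) (auto simp: indicator_def intro: rearr_antimono)
  finally show ?thesis .
qed

lemma rearr_integral_le_add:
  assumes "0 < s" "s \<le> t"
  shows "rearr_integral R g t \<le> rearr_integral R g s + ennreal (t - s) * rearr R g s"
proof -
  have split: "rearr_integral R g t = rearr_integral R g s + (\<integral>\<^sup>+ x\<in>{s..<t}. rearr R g x \<partial>lborel)"
    unfolding rearr_integral_def by (rule set_nn_integral_Ioo_split) (use assms in auto)
  have "(\<integral>\<^sup>+ x\<in>{s..<t}. rearr R g x \<partial>lborel) \<le> (\<integral>\<^sup>+ x\<in>{s..<t}. rearr R g s \<partial>lborel)"
    by (intro nn_integral_mono) (auto simp: indicator_def intro: rearr_antimono)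
  also have "\<dots> = ennreal (t - s) * rearr R g s"
    using assms by (simp add: nn_integral_cmult_indicator mult.commute)
  finally show ?thesis unfolding split by (rule add_left_mono)
qed

lemma rearr_le_dstar: "0 < s \<Longrightarrow> rearr R g s \<le> dstar R g s"
  using mult_rearr_le_rearr_integral[of s R g]
  by (simp add: dstar_eq_rearr_integral ennreal_le_divide_iff mult.commute)

lemma dstar_antimono:
  assumes "0 < s" "s \<le> t" shows "dstar R g t \<le> dstar R g s"
proof -
  have "rearr_integral R g t \<le> rearr_integral R g s + ennreal (t - s) * rearr R g s"
    by (rule rearr_integral_le_add[OF assms])
  also have "\<dots> \<le> dstar R g s * ennreal s + ennreal (t - s) * dstar R g s"
    using rearr_le_dstar[OF assms(1), of R g]
    by (simp add: rearr_integral_eq_dstar[OF assms(1)] mult_left_mono)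
  also have "\<dots> = dstar R g s * ennreal t"
  proof -
    have "ennreal s + ennreal (t - s) = ennreal t"
      using assms by (simp add: ennreal_plus[symmetric] del: ennreal_plus)
    then show ?thesis by (metis distrib_left mult.commute)
  qed
  finally show ?thesis
    using assms by (simp add: dstar_eq_rearr_integral ennreal_divide_le_iff)
qed

lemma antimono_on_dstar: "antimono_on (Ioo0 R) (dstar R g)"
  by (rule monotone_onI) (auto simp: Ioo0_def intro: dstar_antimono)

subsection \<open>Quasiconcave functions and the B-condition\<close>

lemma quasiconcave_pos: "quasiconcave R \<psi> \<Longrightarrow> t \<in> Ioo0 R \<Longrightarrow> 0 < \<psi> t"
  unfolding quasiconcave_def Ioo0_def by (metis less_eq_real_def mem_Collect_eq)

lemma quasiconcave_nonneg: "quasiconcave R \<psi> \<Longrightarrow> 0 \<le> t \<Longrightarrow> ereal t < R \<Longrightarrow> 0 \<le> \<psi> t"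
  unfolding quasiconcave_def by blast

lemma quasiconcave_mono:
  "quasiconcave R \<psi> \<Longrightarrow> 0 \<le> s \<Longrightarrow> s \<le> t \<Longrightarrow> ereal t < R \<Longrightarrow> \<psi> s \<le> \<psi> t"
  unfolding quasiconcave_def by blast

lemma quasiconcave_ratio:
  "quasiconcave R \<psi> \<Longrightarrow> 0 < s \<Longrightarrow> s \<le> t \<Longrightarrow> ereal t < R \<Longrightarrow> \<psi> t / t \<le> \<psi> s / s"
  unfolding quasiconcave_def by blast

lemma quasiconcave_le_scale:
  assumes q: "quasiconcave R \<psi>" and "0 < x" "x \<le> y" "ereal y < R" "y \<le> k * x"
  shows "\<psi> y \<le> k * \<psi> x"
proof -
  have "\<psi> y / y \<le> \<psi> x / x" by (rule quasiconcave_ratio[OF q assms(2-4)])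
  then have 1: "\<psi> y * x \<le> \<psi> x * y" using assms by (simp add: field_simps)
  have "0 \<le> \<psi> x" using assms by (intro quasiconcave_nonneg[OF q]) (auto intro: ereal_le_less_trans)
  then have "\<psi> x * y \<le> \<psi> x * (k * x)" using assms by (intro mult_left_mono) auto
  with 1 have "\<psi> y * x \<le> (k * \<psi> x) * x" by (simp add: algebra_simps)
  then show ?thesis using assms(2) by simp
qed

text \<open>\<open>\<psi>\<close> is only known to be monotone on [0,R); clamping the argument into [0,a] gives a
  monotone, hence Borel, function that agrees with \<open>\<psi>\<close> on [0,a].\<close>
definition psi_clamp :: "(real \<Rightarrow> real) \<Rightarrow> real \<Rightarrow> real \<Rightarrow> real" where
  "psi_clamp \<psi> a x = \<psi> (min (max x 0) a)"

lemma psi_clamp_eq [simp]: "0 \<le> x \<Longrightarrow> x \<le> a \<Longrightarrow> psi_clamp \<psi> a x = \<psi> x"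
  by (simp add: psi_clamp_def)

lemma borel_measurable_psi_clamp:
  assumes q: "quasiconcave R \<psi>" and a: "0 \<le> a" "ereal a < R"
  shows "psi_clamp \<psi> a \<in> borel_measurable borel"
proof (rule borel_measurable_mono, rule monoI)
  fix x y :: real assume "x \<le> y"
  then show "psi_clamp \<psi> a x \<le> psi_clamp \<psi> a y"
    using a unfolding psi_clamp_def
    by (intro quasiconcave_mono[OF q]) (auto simp: min_def max_def intro: ereal_le_less_trans)
qed

lemma borel_measurable_recip_indicator:
  assumes q: "quasiconcave R \<psi>" and a: "0 \<le> a" "ereal a < R" and A: "A \<subseteq> {0..a}" "A \<in> sets borel"
  shows "(\<lambda>s. ennreal (1 / \<psi> s) * indicator A s) \<in> borel_measurable borel"
proof -
  have "(\<lambda>s. ennreal (1 / psi_clamp \<psi> a s) * indicator A s) \<in> borel_measurable borel"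
    using borel_measurable_psi_clamp[OF q a] A by measurable
  moreover have "(\<lambda>s. ennreal (1 / psi_clamp \<psi> a s) * indicator A s) = (\<lambda>s. ennreal (1 / \<psi> s) * indicator A s)"
    using A by (auto simp: indicator_def fun_eq_iff)
  ultimately show ?thesis by simp
qed

definition recip_integral :: "(real \<Rightarrow> real) \<Rightarrow> real \<Rightarrow> ennreal" where
  "recip_integral \<psi> t = (\<integral>\<^sup>+ s\<in>{0<..<t}. ennreal (1 / \<psi> s) \<partial>lborel)"

lemma B_condition_iff:
  assumes q: "quasiconcave R \<psi>"
  shows "B_condition R \<psi> \<longleftrightarrow> (\<exists>K>0. \<forall>t\<in>Ioo0 R. recip_integral \<psi> t \<le> ennreal (K * t / \<psi> t))"
proof -
  have "recip_integral \<psi> t / ennreal t \<le> ennreal (K / \<psi> t) \<longleftrightarrow> recip_integral \<psi> t \<le> ennreal (K * t / \<psi> t)"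
    if "t \<in> Ioo0 R" "0 < K" for t K
    using that quasiconcave_pos[OF q that(1)]
    by (simp add: ennreal_divide_le_iff ennreal_mult[symmetric] Ioo0_def)
  then show ?thesis unfolding B_condition_def recip_integral_def[symmetric] by blast
qed

lemma recip_integral_le_add_tail:
  assumes q: "quasiconcave R \<psi>" and ab: "0 < a" "a \<le> b" "b \<le> k * a" "ereal b < R"
  shows "recip_integral \<psi> b \<le> recip_integral \<psi> a + ennreal (k * (b - a) / \<psi> b)"
proof -
  have pb: "0 < \<psi> b" using ab by (intro quasiconcave_pos[OF q]) (simp add: Ioo0_def)
  have k: "0 < k" using ab by (smt (verit) mult_nonpos_nonneg)
  have "ennreal (1 / \<psi> x) \<le> ennreal (k / \<psi> b)" if x: "a \<le> x" "x < b" for x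
  proof -
    have "\<psi> b \<le> k * \<psi> x"
      using ab x k by (intro quasiconcave_le_scale[OF q]) (auto intro: order_trans mult_left_mono)
    moreover have "0 < \<psi> x"
      using x ab by (intro quasiconcave_pos[OF q]) (auto simp: Ioo0_def intro: ereal_le_less_trans[OF less_imp_le])
    ultimately show ?thesis using pb k by (intro ennreal_leI) (simp add: field_simps)
  qed
  then have "(\<integral>\<^sup>+ x\<in>{a..<b}. ennreal (1 / \<psi> x) \<partial>lborel) \<le> (\<integral>\<^sup>+ x\<in>{a..<b}. ennreal (k / \<psi> b) \<partial>lborel)"
    by (intro nn_integral_mono) (simp add: indicator_def)
  also have "\<dots> = ennreal (k * (b - a) / \<psi> b)"
    using ab pb k by (simp add: nn_integral_cmult_indicator ennreal_mult[symmetric])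
  finally have tail: "(\<integral>\<^sup>+ x\<in>{a..<b}. ennreal (1 / \<psi> x) \<partial>lborel) \<le> ennreal (k * (b - a) / \<psi> b)" .
  have "recip_integral \<psi> b = recip_integral \<psi> a + (\<integral>\<^sup>+ x\<in>{a..<b}. ennreal (1 / \<psi> x) \<partial>lborel)"
    unfolding recip_integral_def
    using ab by (intro set_nn_integral_Ioo_split borel_measurable_recip_indicator[OF q, of b]) auto
  then show ?thesis using tail by (simp add: add_left_mono)
qed

subsection \<open>The maximal operator\<close>

definition psi_sup :: "ereal \<Rightarrow> (real \<Rightarrow> real) \<Rightarrow> (real \<Rightarrow> ennreal) \<Rightarrow> real \<Rightarrow> ennreal" where
  "psi_sup R \<psi> g t = (SUP s\<in>{s. t < s \<and> ereal s < R}. ennreal (\<psi> s) * rearr R g s)"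

lemma Tpsi_eq_psi_sup: "Tpsi R \<psi> g t = psi_sup R \<psi> g t / ennreal (\<psi> t)"
  by (simp add: Tpsi_def psi_sup_def)

lemma le_psi_sup: "t < u \<Longrightarrow> ereal u < R \<Longrightarrow> ennreal (\<psi> u) * rearr R g u \<le> psi_sup R \<psi> g t"
  unfolding psi_sup_def by (intro SUP_upper) auto

lemma psi_sup_le:
  "(\<And>u. t < u \<Longrightarrow> ereal u < R \<Longrightarrow> ennreal (\<psi> u) * rearr R g u \<le> B) \<Longrightarrow> psi_sup R \<psi> g t \<le> B"
  unfolding psi_sup_def by (intro SUP_least) auto

lemma psi_sup_antimono: "t \<le> t' \<Longrightarrow> psi_sup R \<psi> g t' \<le> psi_sup R \<psi> g t"
  unfolding psi_sup_def by (intro SUP_subset_mono) auto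

lemma le_Tpsi:
  "t < u \<Longrightarrow> ereal u < R \<Longrightarrow> ennreal (\<psi> u) * rearr R g u / ennreal (\<psi> t) \<le> Tpsi R \<psi> g t"
  unfolding Tpsi_eq_psi_sup by (intro divide_right_mono_ennreal le_psi_sup)

lemma antimono_on_Tpsi:
  assumes q: "quasiconcave R \<psi>" shows "antimono_on (Ioo0 R) (Tpsi R \<psi> g)"
proof (rule monotone_onI)
  fix t t' assume t: "t \<in> Ioo0 R" and t': "t' \<in> Ioo0 R" and "t \<le> t'"
  have "\<psi> t \<le> \<psi> t'" using t t' \<open>t \<le> t'\<close> by (intro quasiconcave_mono[OF q]) (auto simp: Ioo0_def)
  have "Tpsi R \<psi> g t' \<le> psi_sup R \<psi> g t / ennreal (\<psi> t')"
    unfolding Tpsi_eq_psi_sup using \<open>t \<le> t'\<close> by (intro divide_right_mono_ennreal psi_sup_antimono)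
  also have "\<dots> \<le> Tpsi R \<psi> g t"
    unfolding Tpsi_eq_psi_sup using quasiconcave_pos[OF q t] quasiconcave_pos[OF q t'] \<open>\<psi> t \<le> \<psi> t'\<close>
    by (simp add: ennreal_divide_eq_mult_inverse mult_left_mono ennreal_leI divide_left_mono)
  finally show "Tpsi R \<psi> g t' \<le> Tpsi R \<psi> g t" .
qed

subsection \<open>Sufficiency of the B-condition\<close>

lemma rearr_integral_le_psi_sup:
  assumes q: "quasiconcave R \<psi>" and t: "t \<in> Ioo0 R" and tu: "t < u" "ereal u < R"
  shows "rearr_integral R g u \<le> rearr_integral R g t + psi_sup R \<psi> g t * recip_integral \<psi> u"
proof -
  have t0: "0 < t" using t by (simp add: Ioo0_def)
  \<comment> \<open>\<open>x = t\<close> is excluded because \<open>psi_sup R \<psi> g t\<close> only sees points strictly beyond \<open>t\<close>.\<close>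
  have "rearr R g x * indicator {t..<u} x \<le> psi_sup R \<psi> g t * (ennreal (1 / \<psi> x) * indicator {0<..<u} x)"
    if "x \<noteq> t" for x
  proof (cases "x \<in> {t..<u}")
    case True
    with that t0 have x: "t < x" "x \<in> Ioo0 R"
      using tu by (auto simp: Ioo0_def intro: ereal_le_less_trans[OF less_imp_le])
    then have "ennreal (\<psi> x) * rearr R g x \<le> psi_sup R \<psi> g t" by (auto simp: Ioo0_def intro: le_psi_sup)
    then have "ennreal (\<psi> x) * rearr R g x * ennreal (1 / \<psi> x) \<le> psi_sup R \<psi> g t * ennreal (1 / \<psi> x)"
      by (rule mult_right_mono) simp
    moreover have "ennreal (\<psi> x) * rearr R g x * ennreal (1 / \<psi> x)
        = rearr R g x * (ennreal (\<psi> x) * ennreal (1 / \<psi> x))"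
      by (simp only: ac_simps)
    moreover have "ennreal (\<psi> x) * ennreal (1 / \<psi> x) = 1"
      using quasiconcave_pos[OF q x(2)] by (simp add: ennreal_mult[symmetric])
    ultimately have "rearr R g x \<le> psi_sup R \<psi> g t * ennreal (1 / \<psi> x)" by simp
    then show ?thesis using True t0 by (simp add: indicator_def)
  qed simp
  then have "(\<integral>\<^sup>+ x\<in>{t..<u}. rearr R g x \<partial>lborel)
      \<le> (\<integral>\<^sup>+ x. psi_sup R \<psi> g t * (ennreal (1 / \<psi> x) * indicator {0<..<u} x) \<partial>lborel)"
    by (intro nn_integral_mono_AE) (use AE_lborel_singleton[of t] in \<open>auto elim: eventually_mono\<close>)
  also have "\<dots> = psi_sup R \<psi> g t * recip_integral \<psi> u"
    unfolding recip_integral_def using t0 tu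
    by (subst nn_integral_cmult) (auto intro: borel_measurable_recip_indicator[OF q, of u])
  finally have tail: "(\<integral>\<^sup>+ x\<in>{t..<u}. rearr R g x \<partial>lborel) \<le> psi_sup R \<psi> g t * recip_integral \<psi> u" .
  have "rearr_integral R g u = rearr_integral R g t + (\<integral>\<^sup>+ x\<in>{t..<u}. rearr R g x \<partial>lborel)"
    unfolding rearr_integral_def by (rule set_nn_integral_Ioo_split) (use t0 tu in auto)
  then show ?thesis using tail by (simp add: add_left_mono)
qed

lemma psi_rearr_dstar_le:
  assumes q: "quasiconcave R \<psi>" and K: "0 < K"
    and B: "\<forall>t\<in>Ioo0 R. recip_integral \<psi> t \<le> ennreal (K * t / \<psi> t)"
    and t: "t \<in> Ioo0 R" and tu: "t < u" "ereal u < R"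
  shows "ennreal (\<psi> u) * rearr R (dstar R g) u \<le> ennreal (\<psi> t) * dstar R g t + ennreal K * psi_sup R \<psi> g t"
proof -
  have t0: "0 < t" and u0: "0 < u" and u: "u \<in> Ioo0 R" using t tu by (auto simp: Ioo0_def)
  have pt: "0 < \<psi> t" and pu: "0 < \<psi> u" using quasiconcave_pos[OF q] t u by auto
  have ratio: "\<psi> u / u \<le> \<psi> t / t" by (rule quasiconcave_ratio[OF q t0 less_imp_le[OF tu(1)] tu(2)])
  have mult_dstar: "ennreal (\<psi> x / x) * rearr_integral R g x = ennreal (\<psi> x) * dstar R g x"
    if "0 < x" "0 < \<psi> x" for x
  proof -
    have "ennreal (\<psi> x / x) = ennreal (\<psi> x) * ennreal (1 / x)"
      using that by (simp add: ennreal_mult[symmetric])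
    then show ?thesis
      using that by (simp add: dstar_eq_rearr_integral ennreal_divide_eq_mult_inverse ac_simps)
  qed
  have K_eq: "ennreal (\<psi> u / u) * ennreal (K * u / \<psi> u) = ennreal K"
    using u0 pu K by (simp add: ennreal_mult[symmetric])
  have "ennreal (\<psi> u) * rearr R (dstar R g) u \<le> ennreal (\<psi> u) * dstar R g u"
    by (intro mult_left_mono rearr_le_antimono_on[OF antimono_on_dstar u]) simp
  also have "\<dots> = ennreal (\<psi> u / u) * rearr_integral R g u"
    using mult_dstar[OF u0 pu] by simp
  also have "\<dots> \<le> ennreal (\<psi> u / u) * (rearr_integral R g t + psi_sup R \<psi> g t * recip_integral \<psi> u)"
    by (intro mult_left_mono rearr_integral_le_psi_sup[OF q t tu]) simp
  also have "\<dots> = ennreal (\<psi> u / u) * rearr_integral R g t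
      + psi_sup R \<psi> g t * (ennreal (\<psi> u / u) * recip_integral \<psi> u)"
    by (simp add: distrib_left mult_ac)
  also have "\<dots> \<le> ennreal (\<psi> t / t) * rearr_integral R g t
      + psi_sup R \<psi> g t * (ennreal (\<psi> u / u) * ennreal (K * u / \<psi> u))"
    using B u ratio by (intro add_mono mult_left_mono mult_right_mono ennreal_leI) auto
  also have "\<dots> = ennreal (\<psi> t) * dstar R g t + ennreal K * psi_sup R \<psi> g t"
    unfolding mult_dstar[OF t0 pt] K_eq by (simp add: mult.commute)
  finally show ?thesis .
qed

lemma Tpsi_dstar_le:
  assumes q: "quasiconcave R \<psi>" and K: "0 < K"
    and B: "\<forall>t\<in>Ioo0 R. recip_integral \<psi> t \<le> ennreal (K * t / \<psi> t)" and t: "t \<in> Ioo0 R"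
  shows "Tpsi R \<psi> (dstar R g) t \<le> ennreal (1 + K) * (Tpsi R \<psi> g t + dstar R g t)"
proof -
  have pt: "0 < \<psi> t" using quasiconcave_pos[OF q t] .
  have "Tpsi R \<psi> (dstar R g) t
      \<le> (ennreal (\<psi> t) * dstar R g t + ennreal K * psi_sup R \<psi> g t) / ennreal (\<psi> t)"
    unfolding Tpsi_eq_psi_sup
    by (intro divide_right_mono_ennreal psi_sup_le psi_rearr_dstar_le[OF q K B t])
  also have "\<dots> = dstar R g t + ennreal K * Tpsi R \<psi> g t"
    using pt by (simp add: add_divide_distrib_ennreal ennreal_mult_divide_cancel_left
        Tpsi_eq_psi_sup ennreal_times_divide)
  also have "\<dots> \<le> ennreal (1 + K) * (Tpsi R \<psi> g t + dstar R g t)"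
  proof -
    have "dstar R g t \<le> ennreal (1 + K) * dstar R g t"
      using K by (intro mult_right_mono[of 1 _ "dstar R g t", simplified])
        (simp add: ennreal_1[symmetric] del: ennreal_1)
    moreover have "ennreal K * Tpsi R \<psi> g t \<le> ennreal (1 + K) * Tpsi R \<psi> g t"
      using K by (intro mult_right_mono ennreal_leI) auto
    ultimately show ?thesis by (simp add: distrib_left add.commute add_mono)
  qed
  finally show ?thesis .
qed

text \<open>No B-condition is needed for the lower estimate: by quasiconcavity \<open>\<psi>(s') \<le> 2\<psi>(s)\<close> for the
  midpoint \<open>s\<close> of \<open>(t,s')\<close>, and \<open>f*(s') \<le> f**(s') \<le> (f**)*(s)\<close>.\<close>
lemma Tpsi_le_Tpsi_dstar:
  assumes q: "quasiconcave R \<psi>" and t: "t \<in> Ioo0 R"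
  shows "Tpsi R \<psi> g t \<le> 2 * Tpsi R \<psi> (dstar R g) t"
proof -
  have t0: "0 < t" using t by (simp add: Ioo0_def)
  have "psi_sup R \<psi> g t \<le> 2 * psi_sup R \<psi> (dstar R g) t"
  proof (rule psi_sup_le)
    fix s' assume s': "t < s'" "ereal s' < R"
    define s where "s = (t + s') / 2"
    have s: "t < s" "s < s'" "s' \<le> 2 * s" using s' t0 by (auto simp: s_def)
    have sR: "ereal s < R" using s s' by (intro ereal_le_less_trans[of s s']) auto
    have "rearr R g s' \<le> dstar R g s'" using s' t0 by (intro rearr_le_dstar) simp
    also have "\<dots> \<le> rearr R (dstar R g) s"
      using s s' t0 by (intro le_rearr_antimono_on[OF antimono_on_dstar]) (auto simp: Ioo0_def)
    finally have 1: "rearr R g s' \<le> rearr R (dstar R g) s" .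
    have 2: "\<psi> s' \<le> 2 * \<psi> s" using s s' t0 by (intro quasiconcave_le_scale[OF q]) auto
    have p: "0 \<le> \<psi> s" using quasiconcave_nonneg[OF q _ sR] s t0 by simp
    have "ennreal (\<psi> s') * rearr R g s' \<le> ennreal (2 * \<psi> s) * rearr R (dstar R g) s"
      using 1 2 by (intro mult_mono ennreal_leI) auto
    also have "\<dots> = 2 * (ennreal (\<psi> s) * rearr R (dstar R g) s)"
      using p by (simp add: ennreal_mult mult.assoc)
    also have "\<dots> \<le> 2 * psi_sup R \<psi> (dstar R g) t"
      using s sR by (intro mult_left_mono le_psi_sup) auto
    finally show "ennreal (\<psi> s') * rearr R g s' \<le> 2 * psi_sup R \<psi> (dstar R g) t" .
  qed
  then have "Tpsi R \<psi> g t \<le> 2 * psi_sup R \<psi> (dstar R g) t / ennreal (\<psi> t)"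
    unfolding Tpsi_eq_psi_sup by (rule divide_right_mono_ennreal)
  then show ?thesis by (simp add: Tpsi_eq_psi_sup ennreal_times_divide)
qed

lemma dstar_le_Tpsi_dstar:
  assumes q: "quasiconcave R \<psi>" and t: "t \<in> Ioo0 R"
  shows "dstar R g t \<le> 2 * Tpsi R \<psi> (dstar R g) t"
proof -
  have t0: "0 < t" using t by (simp add: Ioo0_def)
  obtain s' where s': "t < s'" "s' \<le> 2 * t" "ereal s' < R" using Ioo0_exists_greater[OF t] by blast
  define s where "s = (t + s') / 2"
  have s: "t < s" "s < s'" using s' by (auto simp: s_def)
  then have sR: "ereal s < R" using s' by (intro ereal_le_less_trans[of s s']) auto
  have pt: "0 < \<psi> t" using quasiconcave_pos[OF q t] .
  have "dstar R g t \<le> rearr_integral R g s' / ennreal t"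
    unfolding dstar_eq_rearr_integral using s' by (intro divide_right_mono_ennreal rearr_integral_mono) simp
  also have "\<dots> \<le> 2 * dstar R g s'"
  proof -
    have "rearr_integral R g s' = dstar R g s' * ennreal s'" using s' t0 by (simp add: rearr_integral_eq_dstar)
    also have "\<dots> \<le> dstar R g s' * ennreal (2 * t)" using s' by (intro mult_left_mono ennreal_leI) auto
    also have "\<dots> = 2 * dstar R g s' * ennreal t" using t0 by (simp add: ennreal_mult mult_ac)
    finally show ?thesis using t0 by (simp add: ennreal_divide_le_iff)
  qed
  also have "dstar R g s' = ennreal (\<psi> t) * dstar R g s' / ennreal (\<psi> t)"
    using pt by (simp add: ennreal_mult_divide_cancel_left)
  also have "\<dots> \<le> ennreal (\<psi> s) * rearr R (dstar R g) s / ennreal (\<psi> t)"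
    using s s' sR t0 quasiconcave_mono[OF q, of t s]
    by (intro divide_right_mono_ennreal mult_mono ennreal_leI le_rearr_antimono_on[OF antimono_on_dstar])
      (auto simp: Ioo0_def)
  also have "\<dots> \<le> Tpsi R \<psi> (dstar R g) t" using s sR by (intro le_Tpsi) auto
  finally show ?thesis by (simp add: mult_left_mono)
qed

lemma Tpsi_dstar_ge:
  assumes q: "quasiconcave R \<psi>" and t: "t \<in> Ioo0 R"
  shows "ennreal (1/4) * (Tpsi R \<psi> g t + dstar R g t) \<le> Tpsi R \<psi> (dstar R g) t"
proof -
  have "Tpsi R \<psi> g t + dstar R g t \<le> 4 * Tpsi R \<psi> (dstar R g) t"
    using add_mono[OF Tpsi_le_Tpsi_dstar[OF q t, of g] dstar_le_Tpsi_dstar[OF q t, of g]]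
    by (simp add: distrib_right[symmetric])
  then have "ennreal (1/4) * (Tpsi R \<psi> g t + dstar R g t) \<le> ennreal (1/4) * (4 * Tpsi R \<psi> (dstar R g) t)"
    by (rule mult_left_mono) simp
  also have "\<dots> = Tpsi R \<psi> (dstar R g) t"
    by (simp add: mult.assoc[symmetric] ennreal_numeral[symmetric] ennreal_mult[symmetric] del: ennreal_numeral)
  finally show ?thesis .
qed

text \<open>The clamp only serves measurability: on the range of integration the weight is \<open>\<psi> v / v\<close>.\<close>
definition tail_weight :: "ereal \<Rightarrow> (real \<Rightarrow> real) \<Rightarrow> (real \<Rightarrow> ennreal) \<Rightarrow> real \<Rightarrow> real \<Rightarrow> ennreal" where
  "tail_weight R \<psi> g t s = (\<integral>\<^sup>+ v\<in>{s/2<..<t}. ennreal (psi_clamp \<psi> t v / v) * rearr R g v \<partial>lborel)"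

lemma tail_weight_antimono: "s \<le> s' \<Longrightarrow> tail_weight R \<psi> g t s' \<le> tail_weight R \<psi> g t s"
  unfolding tail_weight_def by (intro nn_integral_mono) (auto simp: indicator_def)

lemma borel_measurable_tail_weight: "tail_weight R \<psi> g t \<in> borel_measurable borel"
  by (rule borel_measurable_antimono_ennreal) (rule tail_weight_antimono)

lemma psi_rearr_le_tail_weight:
  assumes q: "quasiconcave R \<psi>" and u: "0 < u" "s < u" "u \<le> t" and tR: "ereal t < R"
  shows "ennreal (\<psi> u) * rearr R g u \<le> 2 * tail_weight R \<psi> g t s"
proof -
  have uR: "ereal u < R" using u tR by (intro ereal_le_less_trans[of u t])
  have "ennreal (\<psi> u / u) * rearr R g u * ennreal (u / 2)
      = (\<integral>\<^sup>+ v\<in>{u/2<..<u}. ennreal (\<psi> u / u) * rearr R g u \<partial>lborel)"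
    using u by (simp add: nn_integral_cmult_indicator)
  also have "\<dots> \<le> tail_weight R \<psi> g t s"
    unfolding tail_weight_def
  proof (intro nn_integral_mono)
    fix v
    show "ennreal (\<psi> u / u) * rearr R g u * indicator {u/2<..<u} v
        \<le> ennreal (psi_clamp \<psi> t v / v) * rearr R g v * indicator {s/2<..<t} v"
    proof (cases "v \<in> {u/2<..<u}")
      case True
      then have v: "0 < v" "v \<le> u" "s/2 < v" "v < t" using u by auto
      have "\<psi> u / u \<le> \<psi> v / v" by (rule quasiconcave_ratio[OF q v(1,2) uR])
      moreover have "rearr R g u \<le> rearr R g v" using v by (intro rearr_antimono)
      ultimately show ?thesis using True v by (auto simp: indicator_def intro!: mult_mono ennreal_leI)
    qed simp
  qed
  finally have half: "ennreal (\<psi> u / u) * rearr R g u * ennreal (u / 2) \<le> tail_weight R \<psi> g t s" .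
  have "2 * ennreal (\<psi> u / u) * ennreal (u / 2) = ennreal (\<psi> u)"
    using u quasiconcave_nonneg[OF q _ uR]
    by (simp add: ennreal_mult[symmetric] ennreal_numeral[symmetric] del: ennreal_numeral)
  then have "ennreal (\<psi> u) * rearr R g u = 2 * (ennreal (\<psi> u / u) * rearr R g u * ennreal (u / 2))"
    by (metis mult.commute mult.left_commute)
  with half show ?thesis by (simp add: mult_left_mono)
qed

lemma Tpsi_le_tail_weight:
  assumes q: "quasiconcave R \<psi>" and s: "0 < s" "s < t" and tR: "ereal t < R"
  shows "Tpsi R \<psi> g s \<le> (psi_sup R \<psi> g t + 2 * tail_weight R \<psi> g t s) * ennreal (1 / \<psi> s)"
proof -
  have ps: "0 < \<psi> s"
    using s tR by (intro quasiconcave_pos[OF q]) (simp add: Ioo0_def ereal_le_less_trans[OF less_imp_le])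
  have "psi_sup R \<psi> g s \<le> psi_sup R \<psi> g t + 2 * tail_weight R \<psi> g t s"
  proof (rule psi_sup_le)
    fix u assume u: "s < u" "ereal u < R"
    show "ennreal (\<psi> u) * rearr R g u \<le> psi_sup R \<psi> g t + 2 * tail_weight R \<psi> g t s"
    proof (cases "t < u")
      case True
      then show ?thesis using le_psi_sup[OF True u(2)] by (simp add: add_increasing2)
    next
      case False
      then have "ennreal (\<psi> u) * rearr R g u \<le> 2 * tail_weight R \<psi> g t s"
        using s u tR by (intro psi_rearr_le_tail_weight[OF q]) auto
      then show ?thesis by (simp add: add_increasing)
    qed
  qed
  then show ?thesis
    unfolding Tpsi_eq_psi_sup using ps by (simp add: ennreal_divide_eq_mult_inverse mult_right_mono)
qed

lemma recip_integral_min_double_le: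
  assumes q: "quasiconcave R \<psi>" and K: "0 < K"
    and B: "\<forall>t\<in>Ioo0 R. recip_integral \<psi> t \<le> ennreal (K * t / \<psi> t)"
    and t: "t \<in> Ioo0 R" and v: "0 < v" "v < t"
  shows "recip_integral \<psi> (min (2 * v) t) \<le> ennreal (2 * K * v / \<psi> v)"
proof -
  define m where "m = min (2 * v) t"
  have m: "0 < m" "m \<le> 2 * v" "m \<le> t" "v \<le> m" using v by (auto simp: m_def)
  have mI: "m \<in> Ioo0 R" using m t by (intro Ioo0_downward_closed[of m t]) auto
  have vI: "v \<in> Ioo0 R" using v t by (intro Ioo0_downward_closed[of v t]) auto
  have pv: "0 < \<psi> v" using quasiconcave_pos[OF q vI] .
  have pm: "\<psi> v \<le> \<psi> m" using m v mI by (intro quasiconcave_mono[OF q]) (auto simp: Ioo0_def)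
  have "recip_integral \<psi> m \<le> ennreal (K * m / \<psi> m)" using B mI by blast
  also have "\<dots> \<le> ennreal (2 * K * v / \<psi> v)"
  proof (rule ennreal_leI)
    have "K * m / \<psi> m \<le> K * m / \<psi> v" using pv pm K m by (intro divide_left_mono) auto
    also have "\<dots> \<le> 2 * K * v / \<psi> v" using pv K m by (intro divide_right_mono) auto
    finally show "K * m / \<psi> m \<le> 2 * K * v / \<psi> v" .
  qed
  finally show ?thesis unfolding m_def .
qed

lemma tail_kernel_integral_le:
  assumes q: "quasiconcave R \<psi>" and K: "0 < K"
    and B: "\<forall>t\<in>Ioo0 R. recip_integral \<psi> t \<le> ennreal (K * t / \<psi> t)" and t: "t \<in> Ioo0 R"
  shows "(\<integral>\<^sup>+ s. ennreal (psi_clamp \<psi> t v / v) * rearr R g v * indicator {s/2<..<t} v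
            * (ennreal (1 / psi_clamp \<psi> t s) * indicator {0<..<t} s) \<partial>lborel)
         \<le> ennreal (2 * K) * (rearr R g v * indicator {0<..<t} v)"
proof (cases "0 < v \<and> v < t")
  case True
  let ?w = "ennreal (\<psi> v / v) * rearr R g v"
  have tR: "ereal t < R" using t by (simp add: Ioo0_def)
  have "(\<integral>\<^sup>+ s. ennreal (psi_clamp \<psi> t v / v) * rearr R g v * indicator {s/2<..<t} v
            * (ennreal (1 / psi_clamp \<psi> t s) * indicator {0<..<t} s) \<partial>lborel)
      = (\<integral>\<^sup>+ s. ?w * (ennreal (1 / \<psi> s) * indicator {0<..<min (2 * v) t} s) \<partial>lborel)"
    using True by (intro nn_integral_cong) (auto simp: indicator_def)
  also have "\<dots> = ?w * recip_integral \<psi> (min (2 * v) t)"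
    unfolding recip_integral_def using True tR
    by (subst nn_integral_cmult) (auto intro: borel_measurable_recip_indicator[OF q, of t])
  also have "\<dots> \<le> ?w * ennreal (2 * K * v / \<psi> v)"
    using recip_integral_min_double_le[OF q K B t] True by (intro mult_left_mono) auto
  also have "\<dots> = ennreal (2 * K) * (rearr R g v * indicator {0<..<t} v)"
  proof -
    have "0 < \<psi> v" using True t by (intro quasiconcave_pos[OF q] Ioo0_downward_closed[of v t]) auto
    then have "ennreal (\<psi> v / v) * ennreal (2 * K * v / \<psi> v) = ennreal (2 * K)"
      using True K by (simp add: ennreal_mult[symmetric])
    then show ?thesis using True by (simp add: indicator_def) (metis mult.commute mult.left_commute)
  qed
  finally show ?thesis .
next
  case False
  have "(\<integral>\<^sup>+ s. ennreal (psi_clamp \<psi> t v / v) * rearr R g v * indicator {s/2<..<t} v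
            * (ennreal (1 / psi_clamp \<psi> t s) * indicator {0<..<t} s) \<partial>lborel) = (\<integral>\<^sup>+ (s::real). 0 \<partial>lborel)"
    by (intro nn_integral_cong) (use False in \<open>auto simp: indicator_def\<close>)
  then show ?thesis by simp
qed

lemma integral_tail_weight_le:
  assumes q: "quasiconcave R \<psi>" and K: "0 < K"
    and B: "\<forall>t\<in>Ioo0 R. recip_integral \<psi> t \<le> ennreal (K * t / \<psi> t)" and t: "t \<in> Ioo0 R"
  shows "(\<integral>\<^sup>+ s. tail_weight R \<psi> g t s * (ennreal (1 / \<psi> s) * indicator {0<..<t} s) \<partial>lborel)
         \<le> ennreal (2 * K) * rearr_integral R g t"
proof -
  have t0: "0 < t" and tR: "ereal t < R" using t by (auto simp: Ioo0_def)
  have clamp: "psi_clamp \<psi> t \<in> borel_measurable borel"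
    using t0 tR by (intro borel_measurable_psi_clamp[OF q]) auto
  define f where "f s v = ennreal (psi_clamp \<psi> t v / v) * rearr R g v * indicator {s/2<..<t} v
      * (ennreal (1 / psi_clamp \<psi> t s) * indicator {0<..<t} s)" for s v
  have "case_prod f = (\<lambda>x. ennreal (psi_clamp \<psi> t (snd x) / snd x) * rearr R g (snd x)
      * (if fst x / 2 < snd x \<and> snd x < t then 1 else 0)
      * (ennreal (1 / psi_clamp \<psi> t (fst x)) * indicator {0<..<t} (fst x)))"
    by (auto simp: f_def fun_eq_iff indicator_def)
  also have "\<dots> \<in> borel_measurable (lborel \<Otimes>\<^sub>M lborel)" using clamp by measurable
  finally have f_meas: "case_prod f \<in> borel_measurable (lborel \<Otimes>\<^sub>M lborel)" .
  have "(\<integral>\<^sup>+ s. tail_weight R \<psi> g t s * (ennreal (1 / \<psi> s) * indicator {0<..<t} s) \<partial>lborel)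
      = (\<integral>\<^sup>+ s. (\<integral>\<^sup>+ v. f s v \<partial>lborel) \<partial>lborel)"
  proof (intro nn_integral_cong)
    fix s
    have "ennreal (1 / \<psi> s) * indicator {0<..<t} s = ennreal (1 / psi_clamp \<psi> t s) * indicator {0<..<t} s"
      by (auto simp: indicator_def)
    moreover have "(\<lambda>v. ennreal (psi_clamp \<psi> t v / v) * rearr R g v * indicator {s/2<..<t} v)
        \<in> borel_measurable lborel"
      using clamp by measurable
    ultimately show "tail_weight R \<psi> g t s * (ennreal (1 / \<psi> s) * indicator {0<..<t} s)
        = (\<integral>\<^sup>+ v. f s v \<partial>lborel)"
      unfolding tail_weight_def f_def by (simp add: nn_integral_multc)
  qed
  also have "\<dots> = (\<integral>\<^sup>+ v. (\<integral>\<^sup>+ s. f s v \<partial>lborel) \<partial>lborel)"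
    using lborel_pair.Fubini'[OF f_meas] by simp
  also have "\<dots> \<le> (\<integral>\<^sup>+ v. ennreal (2 * K) * (rearr R g v * indicator {0<..<t} v) \<partial>lborel)"
    unfolding f_def by (intro nn_integral_mono tail_kernel_integral_le[OF q K B t])
  also have "\<dots> = ennreal (2 * K) * rearr_integral R g t"
    unfolding rearr_integral_def by (simp add: nn_integral_cmult)
  finally show ?thesis .
qed

lemma rearr_integral_Tpsi_le:
  assumes q: "quasiconcave R \<psi>" and t: "t \<in> Ioo0 R"
  shows "rearr_integral R (Tpsi R \<psi> g) t \<le> psi_sup R \<psi> g t * recip_integral \<psi> t
    + 2 * (\<integral>\<^sup>+ s. tail_weight R \<psi> g t s * (ennreal (1 / \<psi> s) * indicator {0<..<t} s) \<partial>lborel)"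
proof -
  have t0: "0 < t" and tR: "ereal t < R" using t by (auto simp: Ioo0_def)
  let ?H = "psi_sup R \<psi> g t" and ?e = "\<lambda>s. ennreal (1 / \<psi> s) * indicator {0<..<t} s"
  have e_meas: "?e \<in> borel_measurable borel"
    using t0 tR by (intro borel_measurable_recip_indicator[OF q]) auto
  have "rearr_integral R (Tpsi R \<psi> g) t \<le> (\<integral>\<^sup>+ s. ?H * ?e s + 2 * (tail_weight R \<psi> g t s * ?e s) \<partial>lborel)"
    unfolding rearr_integral_def
  proof (intro nn_integral_mono)
    fix s
    show "rearr R (Tpsi R \<psi> g) s * indicator {0<..<t} s \<le> ?H * ?e s + 2 * (tail_weight R \<psi> g t s * ?e s)"
    proof (cases "0 < s \<and> s < t")
      case True
      then have "rearr R (Tpsi R \<psi> g) s \<le> Tpsi R \<psi> g s"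
        using t by (intro rearr_le_antimono_on[OF antimono_on_Tpsi[OF q]] Ioo0_downward_closed[of s t]) auto
      also have "\<dots> \<le> (?H + 2 * tail_weight R \<psi> g t s) * ennreal (1 / \<psi> s)"
        using True tR by (intro Tpsi_le_tail_weight[OF q]) auto
      finally show ?thesis using True by (simp add: distrib_right mult.assoc)
    qed simp
  qed
  also have "\<dots> = ?H * recip_integral \<psi> t + 2 * (\<integral>\<^sup>+ s. tail_weight R \<psi> g t s * ?e s \<partial>lborel)"
    using borel_measurable_tail_weight[of R \<psi> g t] e_meas
    by (simp add: nn_integral_add nn_integral_cmult recip_integral_def)
  finally show ?thesis .
qed

lemma dstar_Tpsi_le:
  assumes q: "quasiconcave R \<psi>" and K: "0 < K"
    and B: "\<forall>t\<in>Ioo0 R. recip_integral \<psi> t \<le> ennreal (K * t / \<psi> t)" and t: "t \<in> Ioo0 R"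
  shows "dstar R (Tpsi R \<psi> g) t \<le> ennreal (4 * K) * (Tpsi R \<psi> g t + dstar R g t)"
proof -
  have t0: "0 < t" using t by (simp add: Ioo0_def)
  have pt: "0 < \<psi> t" using quasiconcave_pos[OF q t] .
  let ?H = "psi_sup R \<psi> g t"
  have "rearr_integral R (Tpsi R \<psi> g) t \<le> ?H * recip_integral \<psi> t
      + 2 * (\<integral>\<^sup>+ s. tail_weight R \<psi> g t s * (ennreal (1 / \<psi> s) * indicator {0<..<t} s) \<partial>lborel)"
    by (rule rearr_integral_Tpsi_le[OF q t])
  also have "\<dots> \<le> ?H * ennreal (K * t / \<psi> t) + 2 * (ennreal (2 * K) * rearr_integral R g t)"
    using B t by (intro add_mono mult_left_mono integral_tail_weight_le[OF q K B t]) auto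
  also have "\<dots> = (ennreal K * Tpsi R \<psi> g t + ennreal (4 * K) * dstar R g t) * ennreal t"
  proof -
    have "ennreal (K * t / \<psi> t) = ennreal K * ennreal (1 / \<psi> t) * ennreal t"
      using K t0 pt by (simp add: ennreal_mult[symmetric])
    then have a: "?H * ennreal (K * t / \<psi> t) = ennreal K * Tpsi R \<psi> g t * ennreal t"
      using pt by (simp add: Tpsi_eq_psi_sup ennreal_divide_eq_mult_inverse ac_simps)
    have "2 * ennreal (2 * K) = ennreal (4 * K)"
      using K by (simp add: ennreal_numeral[symmetric] ennreal_mult[symmetric] del: ennreal_numeral)
    then have b: "2 * (ennreal (2 * K) * rearr_integral R g t) = ennreal (4 * K) * dstar R g t * ennreal t"
      using t0 by (metis rearr_integral_eq_dstar mult.assoc)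
    show ?thesis unfolding a b by (simp add: distrib_right)
  qed
  finally have "dstar R (Tpsi R \<psi> g) t \<le> ennreal K * Tpsi R \<psi> g t + ennreal (4 * K) * dstar R g t"
    using t0 by (simp add: dstar_eq_rearr_integral ennreal_divide_le_iff)
  also have "\<dots> \<le> ennreal (4 * K) * (Tpsi R \<psi> g t + dstar R g t)"
    using K by (simp add: distrib_left add_right_mono mult_right_mono ennreal_leI)
  finally show ?thesis .
qed

subsection \<open>Necessity of the B-condition\<close>

definition dstar_Tpsi_estimate :: "ereal \<Rightarrow> (real \<Rightarrow> real) \<Rightarrow> real \<Rightarrow> bool" where
  "dstar_Tpsi_estimate R \<psi> C \<longleftrightarrow> (\<forall>f :: real \<Rightarrow> real. f \<in> borel_measurable (restrict_space lebesgue (Ioo0 R)) \<longrightarrow>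
     (\<forall>t \<in> Ioo0 R. dstar R (Tpsi R \<psi> (\<lambda>x. ennreal \<bar>f x\<bar>)) t
        \<le> ennreal C * (Tpsi R \<psi> (\<lambda>x. ennreal \<bar>f x\<bar>) t + dstar R (\<lambda>x. ennreal \<bar>f x\<bar>) t)))"

definition Tpsi_dstar_upper_estimate :: "ereal \<Rightarrow> (real \<Rightarrow> real) \<Rightarrow> real \<Rightarrow> bool" where
  "Tpsi_dstar_upper_estimate R \<psi> C \<longleftrightarrow> (\<forall>f :: real \<Rightarrow> real. f \<in> borel_measurable (restrict_space lebesgue (Ioo0 R)) \<longrightarrow>
     (\<forall>t \<in> Ioo0 R. Tpsi R \<psi> (dstar R (\<lambda>x. ennreal \<bar>f x\<bar>)) t
        \<le> ennreal C * (Tpsi R \<psi> (\<lambda>x. ennreal \<bar>f x\<bar>) t + dstar R (\<lambda>x. ennreal \<bar>f x\<bar>) t)))"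

definition Tpsi_dstar_estimate :: "ereal \<Rightarrow> (real \<Rightarrow> real) \<Rightarrow> real \<Rightarrow> real \<Rightarrow> bool" where
  "Tpsi_dstar_estimate R \<psi> c C \<longleftrightarrow> (\<forall>f :: real \<Rightarrow> real. f \<in> borel_measurable (restrict_space lebesgue (Ioo0 R)) \<longrightarrow>
     (\<forall>t \<in> Ioo0 R.
        ennreal c * (Tpsi R \<psi> (\<lambda>x. ennreal \<bar>f x\<bar>) t + dstar R (\<lambda>x. ennreal \<bar>f x\<bar>) t)
          \<le> Tpsi R \<psi> (dstar R (\<lambda>x. ennreal \<bar>f x\<bar>)) t
        \<and> Tpsi R \<psi> (dstar R (\<lambda>x. ennreal \<bar>f x\<bar>)) t
          \<le> ennreal C * (Tpsi R \<psi> (\<lambda>x. ennreal \<bar>f x\<bar>) t + dstar R (\<lambda>x. ennreal \<bar>f x\<bar>) t)))"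

lemma Tpsi_dstar_upper_estimate_if_estimate:
  "Tpsi_dstar_estimate R \<psi> c C \<Longrightarrow> Tpsi_dstar_upper_estimate R \<psi> C"
  unfolding Tpsi_dstar_estimate_def Tpsi_dstar_upper_estimate_def by blast

lemma antimono_on_indicator_Ioo: "antimono_on (Ioo0 R) (indicator {0<..<b} :: real \<Rightarrow> ennreal)"
  by (rule monotone_onI) (auto simp: indicator_def Ioo0_def)

lemma rearr_indicator_le_1: "rearr R (indicator A) s \<le> 1"
  unfolding rearr_def by (rule Inf_lower) (auto intro!: exI[of _ 1] simp: indicator_def)

lemma Tpsi_indicator_Ioo_eq_0:
  assumes "0 < b" shows "Tpsi R \<psi> (indicator {0<..<b}) b = 0"
proof -
  have "psi_sup R \<psi> (indicator {0<..<b}) b \<le> 0"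
  proof (rule psi_sup_le)
    fix u assume u: "b < u" "ereal u < R"
    then have "rearr R (indicator {0<..<b}) u \<le> indicator {0<..<b} u"
      using assms by (intro rearr_le_antimono_on[OF antimono_on_indicator_Ioo]) (auto simp: Ioo0_def)
    then show "ennreal (\<psi> u) * rearr R (indicator {0<..<b}) u \<le> 0" using u by simp
  qed
  then show ?thesis by (simp add: Tpsi_eq_psi_sup)
qed

lemma dstar_indicator_Ioo_le_1:
  assumes "0 < b" shows "dstar R (indicator {0<..<b}) b \<le> 1"
proof -
  have "rearr_integral R (indicator {0<..<b}) b \<le> (\<integral>\<^sup>+ s\<in>{0<..<b}. 1 \<partial>lborel)"
    unfolding rearr_integral_def
    by (intro nn_integral_mono) (simp add: indicator_def rearr_indicator_le_1)
  also have "\<dots> = ennreal b" using assms by simp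
  finally show ?thesis using assms by (simp add: dstar_eq_rearr_integral ennreal_divide_le_iff)
qed

lemma rearr_Tpsi_indicator_ge:
  assumes q: "quasiconcave R \<psi>" and b: "b \<in> Ioo0 R" and s: "0 < s" "s < b / 4"
  shows "ennreal (\<psi> b / (2 * \<psi> s)) \<le> rearr R (Tpsi R \<psi> (indicator {0<..<b})) s"
proof -
  define s' where "s' = 3 * s / 2"
  define u where "u = 3 * b / 4"
  have b0: "0 < b" and bR: "ereal b < R" using b by (auto simp: Ioo0_def)
  have s'I: "s' \<in> Ioo0 R" and sI: "s \<in> Ioo0 R" and uI: "u \<in> Ioo0 R"
    using s b0 by (auto simp: s'_def u_def intro!: Ioo0_downward_closed[OF _ _ b])
  have ps: "0 < \<psi> s" and ps': "0 < \<psi> s'" and pu: "0 < \<psi> u"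
    using quasiconcave_pos[OF q] sI s'I uI by auto
  have s's: "\<psi> s' \<le> 3/2 * \<psi> s" using s s'I by (intro quasiconcave_le_scale[OF q]) (auto simp: s'_def Ioo0_def)
  have bu: "\<psi> b \<le> 4/3 * \<psi> u" using b0 bR by (intro quasiconcave_le_scale[OF q]) (auto simp: u_def)
  have "\<psi> b / (2 * \<psi> s) \<le> (4/3 * \<psi> u) / (2 * \<psi> s)" using bu ps by (intro divide_right_mono) auto
  also have "\<dots> = \<psi> u / (3/2 * \<psi> s)" by simp
  also have "\<dots> \<le> \<psi> u / \<psi> s'" using s's ps' pu by (intro divide_left_mono) auto
  finally have "\<psi> b / (2 * \<psi> s) \<le> \<psi> u / \<psi> s'" .
  then have "ennreal (\<psi> b / (2 * \<psi> s)) \<le> ennreal (\<psi> u) * 1 / ennreal (\<psi> s')"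
    using ps' pu by (simp add: divide_ennreal ennreal_leI)
  also have "\<dots> \<le> ennreal (\<psi> u) * rearr R (indicator {0<..<b}) u / ennreal (\<psi> s')"
  proof -
    have "indicator {0<..<b} (7 * b / 8) \<le> rearr R (indicator {0<..<b}) u"
      using b0 bR by (intro le_rearr_antimono_on[OF antimono_on_indicator_Ioo])
        (auto simp: u_def Ioo0_def intro: ereal_le_less_trans[of _ b])
    then show ?thesis using b0 by (intro divide_right_mono_ennreal mult_left_mono) auto
  qed
  also have "\<dots> \<le> Tpsi R \<psi> (indicator {0<..<b}) s'"
    using s uI by (intro le_Tpsi) (auto simp: s'_def u_def Ioo0_def)
  also have "\<dots> \<le> rearr R (Tpsi R \<psi> (indicator {0<..<b})) s"
    using s s'I by (intro le_rearr_antimono_on[OF antimono_on_Tpsi[OF q]]) (auto simp: s'_def)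
  finally show ?thesis .
qed

lemma recip_integral_quarter_le:
  assumes q: "quasiconcave R \<psi>" and C: "0 < C" and b: "b \<in> Ioo0 R"
    and bound: "dstar R (Tpsi R \<psi> (indicator {0<..<b})) b \<le> ennreal C"
  shows "recip_integral \<psi> (b / 4) \<le> ennreal (2 * C * b / \<psi> b)"
proof -
  have b0: "0 < b" and bR: "ereal b < R" using b by (auto simp: Ioo0_def)
  have pb: "0 < \<psi> b" using quasiconcave_pos[OF q b] .
  have "ennreal (\<psi> b / 2) * recip_integral \<psi> (b / 4)
      = (\<integral>\<^sup>+ s. ennreal (\<psi> b / 2) * (ennreal (1 / \<psi> s) * indicator {0<..<b / 4} s) \<partial>lborel)"
    unfolding recip_integral_def using b0 bR
    by (subst nn_integral_cmult) (auto intro: borel_measurable_recip_indicator[OF q, of b])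
  also have "\<dots> \<le> rearr_integral R (Tpsi R \<psi> (indicator {0<..<b})) b"
    unfolding rearr_integral_def
  proof (intro nn_integral_mono)
    fix s
    show "ennreal (\<psi> b / 2) * (ennreal (1 / \<psi> s) * indicator {0<..<b / 4} s)
        \<le> rearr R (Tpsi R \<psi> (indicator {0<..<b})) s * indicator {0<..<b} s"
    proof (cases "0 < s \<and> s < b / 4")
      case True
      then have "0 < \<psi> s" using b by (intro quasiconcave_pos[OF q] Ioo0_downward_closed[of s b]) auto
      then have "ennreal (\<psi> b / 2) * ennreal (1 / \<psi> s) = ennreal (\<psi> b / (2 * \<psi> s))"
        using pb by (simp add: ennreal_mult[symmetric])
      then show ?thesis using True rearr_Tpsi_indicator_ge[OF q b, of s] by (simp add: indicator_def)
    qed simp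
  qed
  also have "\<dots> \<le> ennreal C * ennreal b"
    using bound b0 by (simp add: rearr_integral_eq_dstar mult_right_mono)
  finally have "recip_integral \<psi> (b / 4) * ennreal (\<psi> b / 2) \<le> ennreal (C * b)"
    using C b0 by (simp add: ennreal_mult mult.commute)
  then have "recip_integral \<psi> (b / 4) \<le> ennreal (C * b) / ennreal (\<psi> b / 2)"
    using pb by (simp add: ennreal_le_divide_iff)
  also have "\<dots> = ennreal (2 * C * b / \<psi> b)"
    using C b0 pb by (simp add: divide_ennreal)
  finally show ?thesis .
qed

text \<open>Test the estimate on the indicator of \<open>(0,b)\<close>: at \<open>b\<close> the right-hand side is at most \<open>C\<close>,
  while the left-hand side dominates \<open>\<psi>(b)\<close> times the integral of \<open>1/\<psi>\<close> over \<open>(0,b/4)\<close>.\<close>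
lemma B_condition_if_dstar_Tpsi_estimate:
  assumes q: "quasiconcave R \<psi>" and C: "0 < C" and est: "dstar_Tpsi_estimate R \<psi> C"
  shows "B_condition R \<psi>"
  unfolding B_condition_iff[OF q]
proof (intro exI[of _ "2 * C + 3"] conjI ballI)
  fix b assume b: "b \<in> Ioo0 R"
  have b0: "0 < b" and bR: "ereal b < R" using b by (auto simp: Ioo0_def)
  have pb: "0 < \<psi> b" using quasiconcave_pos[OF q b] .
  let ?g = "indicator {0<..<b} :: real \<Rightarrow> ennreal"
  have meas: "(indicator {0<..<b} :: real \<Rightarrow> real) \<in> borel_measurable (restrict_space lebesgue (Ioo0 R))"
    by (intro borel_measurable_restrict_Ioo0) simp
  have abs_eq: "(\<lambda>x. ennreal \<bar>indicator {0<..<b} x :: real\<bar>) = ?g" by (auto simp: indicator_def fun_eq_iff)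
  have "dstar R (Tpsi R \<psi> (\<lambda>x. ennreal \<bar>indicator {0<..<b} x :: real\<bar>)) b
      \<le> ennreal C * (Tpsi R \<psi> (\<lambda>x. ennreal \<bar>indicator {0<..<b} x :: real\<bar>) b
                    + dstar R (\<lambda>x. ennreal \<bar>indicator {0<..<b} x :: real\<bar>) b)"
    using est meas b unfolding dstar_Tpsi_estimate_def by blast
  also have "\<dots> \<le> ennreal C"
    unfolding abs_eq Tpsi_indicator_Ioo_eq_0[OF b0]
    using mult_left_mono[OF dstar_indicator_Ioo_le_1[OF b0, of R], of "ennreal C"] by simp
  finally have "recip_integral \<psi> (b / 4) \<le> ennreal (2 * C * b / \<psi> b)"
    unfolding abs_eq by (rule recip_integral_quarter_le[OF q C b])
  moreover have "recip_integral \<psi> b \<le> recip_integral \<psi> (b / 4) + ennreal (4 * (b - b / 4) / \<psi> b)"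
    using b0 bR by (intro recip_integral_le_add_tail[OF q]) auto
  ultimately have "recip_integral \<psi> b \<le> ennreal (2 * C * b / \<psi> b) + ennreal (4 * (b - b / 4) / \<psi> b)"
    by (meson add_right_mono order_trans)
  also have "\<dots> = ennreal ((2 * C + 3) * b / \<psi> b)"
    using b0 pb C by (simp add: ennreal_plus[symmetric] field_simps del: ennreal_plus)
  finally show "recip_integral \<psi> b \<le> ennreal ((2 * C + 3) * b / \<psi> b)" .
qed (use C in simp)

lemma set_nn_integral_Ioo_le_of_tails:
  fixes h :: "real \<Rightarrow> ennreal"
  assumes meas: "(\<lambda>x. h x * indicator {0<..<b} x) \<in> borel_measurable borel"
    and tails: "\<And>t. 0 < t \<Longrightarrow> t < b \<Longrightarrow> (\<integral>\<^sup>+ x\<in>{t<..<b}. h x \<partial>lborel) \<le> M"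
  shows "(\<integral>\<^sup>+ x\<in>{0<..<b}. h x \<partial>lborel) \<le> M"
proof (cases "0 < b")
  case b: True
  define F where "F n x = h x * indicator {b / (real n + 2)<..<b} x" for n x
  have "F n = (\<lambda>x. h x * indicator {0<..<b} x * indicator {b / (real n + 2)<..<b} x)" for n
    using b by (auto simp: F_def fun_eq_iff indicator_def intro: order.strict_trans[rotated])
  then have F_meas: "F n \<in> borel_measurable lborel" for n using meas by simp
  have inc: "incseq F"
  proof (rule incseq_SucI, rule le_funI)
    fix n x
    have "b / (real (Suc n) + 2) \<le> b / (real n + 2)" using b by (intro divide_left_mono) auto
    then show "F n x \<le> F (Suc n) x" unfolding F_def by (intro mult_left_mono) (auto simp: indicator_def)
  qed
  have "(\<integral>\<^sup>+ x\<in>{0<..<b}. h x \<partial>lborel) \<le> (\<integral>\<^sup>+ x. (SUP n. F n x) \<partial>lborel)"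
  proof (intro nn_integral_mono)
    fix x
    show "h x * indicator {0<..<b} x \<le> (SUP n. F n x)"
    proof (cases "0 < x \<and> x < b")
      case True
      obtain n :: nat where "b / x < real n" using reals_Archimedean2 by blast
      then have "b < x * (real n + 2)" using True by (simp add: field_simps)
      then have "h x * indicator {0<..<b} x = F n x" using True by (simp add: F_def indicator_def field_simps)
      also have "\<dots> \<le> (SUP n. F n x)" by (rule SUP_upper) simp
      finally show ?thesis .
    qed simp
  qed
  also have "\<dots> = (SUP n. \<integral>\<^sup>+ x. F n x \<partial>lborel)"
    by (rule nn_integral_monotone_convergence_SUP[OF inc F_meas])
  also have "\<dots> \<le> M"
  proof (rule SUP_least)
    fix n
    have "0 < b / (real n + 2)" "b / (real n + 2) < b"
      using b by (auto simp: field_simps intro: add_pos_nonneg)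
    then show "(\<integral>\<^sup>+ x. F n x \<partial>lborel) \<le> M" unfolding F_def by (rule tails)
  qed
  finally show ?thesis .
qed simp

definition recip_test :: "(real \<Rightarrow> real) \<Rightarrow> real \<Rightarrow> real \<Rightarrow> real \<Rightarrow> real" where
  "recip_test \<psi> a t x = (if 0 < x \<and> x < a then 1 / \<psi> (max x t) else 0)"

lemma psi_max_pos:
  assumes q: "quasiconcave R \<psi>" and a: "a \<in> Ioo0 R" and "0 < x" "x < a" "t < a"
  shows "0 < \<psi> (max x t)"
  using assms by (intro quasiconcave_pos[OF q] Ioo0_downward_closed[OF _ _ a]) auto

lemma abs_recip_test:
  assumes q: "quasiconcave R \<psi>" and a: "a \<in> Ioo0 R" and "t < a"
  shows "\<bar>recip_test \<psi> a t x\<bar> = recip_test \<psi> a t x"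
  using psi_max_pos[OF q a _ _ \<open>t < a\<close>, of x] by (auto simp: recip_test_def)

lemma borel_measurable_recip_test:
  assumes q: "quasiconcave R \<psi>" and a: "a \<in> Ioo0 R" and "t < a"
  shows "recip_test \<psi> a t \<in> borel_measurable borel"
proof -
  have "(\<lambda>x. if 0 < x \<and> x < a then 1 / psi_clamp \<psi> a (max x t) else 0) \<in> borel_measurable borel"
    using borel_measurable_psi_clamp[OF q, of a] a by (auto simp: Ioo0_def)
  moreover have "(\<lambda>x. if 0 < x \<and> x < a then 1 / psi_clamp \<psi> a (max x t) else 0) = recip_test \<psi> a t"
    using assms by (auto simp: fun_eq_iff recip_test_def)
  ultimately show ?thesis by simp
qed

lemma antimono_on_recip_test:
  assumes q: "quasiconcave R \<psi>" and a: "a \<in> Ioo0 R" and "t < a"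
  shows "antimono_on (Ioo0 R) (\<lambda>x. ennreal (recip_test \<psi> a t x))"
proof (rule monotone_onI)
  fix x y assume x: "x \<in> Ioo0 R" and y: "y \<in> Ioo0 R" and "x \<le> y"
  show "ennreal (recip_test \<psi> a t y) \<le> ennreal (recip_test \<psi> a t x)"
  proof (cases "y < a")
    case True
    have "\<psi> (max x t) \<le> \<psi> (max y t)"
      using x y a True \<open>x \<le> y\<close> \<open>t < a\<close>
      by (intro quasiconcave_mono[OF q]) (auto simp: Ioo0_def intro: ereal_le_less_trans[OF less_imp_le])
    then have "1 / \<psi> (max y t) \<le> 1 / \<psi> (max x t)"
      using psi_max_pos[OF q a, of x t] x True \<open>x \<le> y\<close> \<open>t < a\<close>
      by (intro divide_left_mono) (auto simp: Ioo0_def)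
    then show ?thesis using x y True \<open>x \<le> y\<close> by (auto simp: recip_test_def Ioo0_def intro: ennreal_leI)
  qed (simp add: recip_test_def)
qed

lemma Tpsi_recip_test_le:
  assumes q: "quasiconcave R \<psi>" and a: "a \<in> Ioo0 R" and t: "0 < t" "t < a"
  shows "Tpsi R \<psi> (\<lambda>x. ennreal (recip_test \<psi> a t x)) t \<le> ennreal (1 / \<psi> t)"
proof -
  let ?g = "\<lambda>x. ennreal (recip_test \<psi> a t x)"
  have pt: "0 < \<psi> t" using t by (intro quasiconcave_pos[OF q] Ioo0_downward_closed[OF _ _ a]) auto
  have "psi_sup R \<psi> ?g t \<le> 1"
  proof (rule psi_sup_le)
    fix u assume u: "t < u" "ereal u < R"
    then have uI: "u \<in> Ioo0 R" using t by (simp add: Ioo0_def)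
    have "ennreal (\<psi> u) * rearr R ?g u \<le> ennreal (\<psi> u) * ?g u"
      by (intro mult_left_mono rearr_le_antimono_on[OF antimono_on_recip_test[OF q a t(2)] uI]) simp
    also have "\<dots> \<le> 1"
    proof (cases "u < a")
      case True
      have "0 < \<psi> u" using quasiconcave_pos[OF q uI] .
      then show ?thesis using True u t by (simp add: recip_test_def ennreal_mult[symmetric] max_def)
    qed (simp add: recip_test_def)
    finally show "ennreal (\<psi> u) * rearr R ?g u \<le> 1" .
  qed
  then have "Tpsi R \<psi> ?g t \<le> 1 / ennreal (\<psi> t)"
    unfolding Tpsi_eq_psi_sup by (rule divide_right_mono_ennreal)
  then show ?thesis using pt by (simp add: divide_ennreal[symmetric])
qed

lemma dstar_recip_test_le:
  assumes q: "quasiconcave R \<psi>" and a: "a \<in> Ioo0 R" and t: "0 < t" "t < a"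
  shows "dstar R (\<lambda>x. ennreal (recip_test \<psi> a t x)) t \<le> ennreal (1 / \<psi> t)"
proof -
  let ?g = "\<lambda>x. ennreal (recip_test \<psi> a t x)"
  have "rearr_integral R ?g t \<le> (\<integral>\<^sup>+ s\<in>{0<..<t}. ennreal (1 / \<psi> t) \<partial>lborel)"
    unfolding rearr_integral_def
  proof (intro nn_integral_mono)
    fix s
    show "rearr R ?g s * indicator {0<..<t} s \<le> ennreal (1 / \<psi> t) * indicator {0<..<t} s"
    proof (cases "0 < s \<and> s < t")
      case True
      then have "s \<in> Ioo0 R" using t by (intro Ioo0_downward_closed[OF _ _ a]) auto
      then have "rearr R ?g s \<le> ?g s" by (rule rearr_le_antimono_on[OF antimono_on_recip_test[OF q a t(2)]])
      then show ?thesis using True t by (simp add: recip_test_def max_def)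
    qed simp
  qed
  also have "\<dots> = ennreal (1 / \<psi> t) * ennreal t" using t by (simp add: nn_integral_cmult_indicator)
  finally show ?thesis using t by (simp add: dstar_eq_rearr_integral ennreal_divide_le_iff)
qed

lemma recip_integral_Ioo_le_rearr_integral_recip_test:
  assumes q: "quasiconcave R \<psi>" and a: "a \<in> Ioo0 R" and t: "0 < t" "t < a"
  shows "(\<integral>\<^sup>+ x\<in>{t<..<a/2}. ennreal (1 / \<psi> x) \<partial>lborel)
    \<le> 2 * rearr_integral R (\<lambda>x. ennreal (recip_test \<psi> a t x)) a"
proof -
  let ?g = "\<lambda>x. ennreal (recip_test \<psi> a t x)"
  have "(\<integral>\<^sup>+ x\<in>{t<..<a/2}. ennreal (1 / \<psi> x) \<partial>lborel) \<le> (\<integral>\<^sup>+ x. 2 * (rearr R ?g x * indicator {0<..<a} x) \<partial>lborel)"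
  proof (intro nn_integral_mono)
    fix x
    show "ennreal (1 / \<psi> x) * indicator {t<..<a/2} x \<le> 2 * (rearr R ?g x * indicator {0<..<a} x)"
    proof (cases "t < x \<and> x < a/2")
      case True
      have xI: "x \<in> Ioo0 R" and x2I: "2 * x \<in> Ioo0 R"
        using True t by (auto intro: Ioo0_downward_closed[OF _ _ a])
      have px: "0 < \<psi> x" and p2: "0 < \<psi> (2 * x)" using quasiconcave_pos[OF q] xI x2I by auto
      have "\<psi> (2 * x) \<le> 2 * \<psi> x" using True t x2I by (intro quasiconcave_le_scale[OF q]) (auto simp: Ioo0_def)
      then have "1 / \<psi> x \<le> 2 * (1 / \<psi> (2 * x))" using px p2 by (simp add: field_simps)
      then have "ennreal (1 / \<psi> x) \<le> ennreal (2 * (1 / \<psi> (2 * x)))" by (rule ennreal_leI)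
      also have "\<dots> = 2 * ennreal (1 / \<psi> (2 * x))" using p2 by (subst ennreal_mult) auto
      also have "\<dots> = 2 * ?g (2 * x)" using True t by (simp add: recip_test_def max_def)
      also have "\<dots> \<le> 2 * rearr R ?g x"
        using True t x2I by (intro mult_left_mono le_rearr_antimono_on[OF antimono_on_recip_test[OF q a t(2)]]) auto
      finally show ?thesis using True t by (simp add: indicator_def)
    qed simp
  qed
  also have "\<dots> = 2 * rearr_integral R ?g a" unfolding rearr_integral_def by (simp add: nn_integral_cmult)
  finally show ?thesis .
qed

lemma Tpsi_dstar_recip_test_le:
  assumes q: "quasiconcave R \<psi>" and C: "0 < C" and est: "Tpsi_dstar_upper_estimate R \<psi> C"
    and a: "a \<in> Ioo0 R" and t: "0 < t" "t < a"
  shows "Tpsi R \<psi> (dstar R (\<lambda>x. ennreal (recip_test \<psi> a t x))) t \<le> ennreal (2 * C) / ennreal (\<psi> t)"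
proof -
  let ?g = "\<lambda>x. ennreal (recip_test \<psi> a t x)"
  have tI: "t \<in> Ioo0 R" using t by (intro Ioo0_downward_closed[OF _ _ a]) auto
  have pt: "0 < \<psi> t" using quasiconcave_pos[OF q tI] .
  have "recip_test \<psi> a t \<in> borel_measurable (restrict_space lebesgue (Ioo0 R))"
    using t by (intro borel_measurable_restrict_Ioo0 borel_measurable_recip_test[OF q a]) auto
  then have "Tpsi R \<psi> (dstar R (\<lambda>x. ennreal \<bar>recip_test \<psi> a t x\<bar>)) t \<le> ennreal C *
      (Tpsi R \<psi> (\<lambda>x. ennreal \<bar>recip_test \<psi> a t x\<bar>) t + dstar R (\<lambda>x. ennreal \<bar>recip_test \<psi> a t x\<bar>) t)"
    using est tI unfolding Tpsi_dstar_upper_estimate_def by blast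
  also have "(\<lambda>x. ennreal \<bar>recip_test \<psi> a t x\<bar>) = ?g"
    using t by (simp add: abs_recip_test[OF q a])
  also have "ennreal C * (Tpsi R \<psi> ?g t + dstar R ?g t) \<le> ennreal C * (ennreal (1 / \<psi> t) + ennreal (1 / \<psi> t))"
    using t by (intro mult_left_mono add_mono Tpsi_recip_test_le[OF q a] dstar_recip_test_le[OF q a]) auto
  also have "\<dots> = ennreal (2 * C) / ennreal (\<psi> t)"
    using C pt by (simp add: divide_ennreal ennreal_plus[symmetric] ennreal_mult[symmetric] del: ennreal_plus)
  finally show ?thesis .
qed

text \<open>Test the upper estimate of (ii) on \<open>1/\<psi>(max x t)\<close>: at \<open>t\<close> the right-hand side is
  \<open>O(1/\<psi>(t))\<close>, while \<open>T_\<psi>(f**)(t)\<close> controls the integral of \<open>1/\<psi>\<close> over \<open>(t,a/2)\<close>.\<close>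
lemma recip_integral_Ioo_le:
  assumes q: "quasiconcave R \<psi>" and C: "0 < C" and est: "Tpsi_dstar_upper_estimate R \<psi> C"
    and a: "a \<in> Ioo0 R" and t: "0 < t" "t < a/2"
  shows "(\<integral>\<^sup>+ x\<in>{t<..<a/2}. ennreal (1 / \<psi> x) \<partial>lborel) \<le> ennreal (8 * C * a / \<psi> a)"
proof -
  have a0: "0 < a" using a by (simp add: Ioo0_def)
  have pt: "0 < \<psi> t" and pa: "0 < \<psi> a"
    using quasiconcave_pos[OF q] a t Ioo0_downward_closed[OF _ _ a, of t] by auto
  let ?g = "\<lambda>x. ennreal (recip_test \<psi> a t x)"
  define s where "s = 3 * a / 4"
  have s: "t < s" "s < a" "a \<le> 2 * s" using t a0 by (auto simp: s_def)
  have sI: "s \<in> Ioo0 R" using s t by (intro Ioo0_downward_closed[OF _ _ a]) auto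
  have ps: "0 < \<psi> s" using quasiconcave_pos[OF q sI] .
  have "dstar R ?g a * ennreal (\<psi> s) \<le> rearr R (dstar R ?g) s * ennreal (\<psi> s)"
    using s a by (intro mult_right_mono le_rearr_antimono_on[OF antimono_on_dstar]) auto
  also have "\<dots> \<le> Tpsi R \<psi> (dstar R ?g) t * ennreal (\<psi> t)"
    using le_Tpsi[of t s R \<psi> "dstar R ?g"] s sI pt by (simp add: ennreal_divide_le_iff Ioo0_def mult.commute)
  also have "\<dots> \<le> ennreal (2 * C)"
    using Tpsi_dstar_recip_test_le[OF q C est a t(1)] t a0 pt by (simp add: ennreal_le_divide_iff)
  finally have "dstar R ?g a \<le> ennreal (2 * C) / ennreal (\<psi> s)"
    using ps by (simp add: ennreal_le_divide_iff)
  then have dstar_a: "dstar R ?g a \<le> ennreal (2 * C / \<psi> s)" using ps C by (simp add: divide_ennreal)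
  have "(\<integral>\<^sup>+ x\<in>{t<..<a/2}. ennreal (1 / \<psi> x) \<partial>lborel) \<le> 2 * (dstar R ?g a * ennreal a)"
    using recip_integral_Ioo_le_rearr_integral_recip_test[OF q a t(1)] t a0
    by (simp add: rearr_integral_eq_dstar)
  also have "\<dots> \<le> 2 * (ennreal (2 * C / \<psi> s) * ennreal a)"
    using dstar_a by (intro mult_left_mono mult_right_mono) auto
  also have "\<dots> = ennreal (4 * C * a / \<psi> s)"
    using C ps a0 by (simp add: ennreal_mult[symmetric] ennreal_numeral[symmetric] del: ennreal_numeral)
  also have "\<dots> \<le> ennreal (8 * C * a / \<psi> a)"
  proof (rule ennreal_leI)
    have "\<psi> a \<le> 2 * \<psi> s" using s a sI by (intro quasiconcave_le_scale[OF q]) (auto simp: Ioo0_def)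
    then have "8 * C * a / (2 * \<psi> s) \<le> 8 * C * a / \<psi> a" using C a0 pa by (intro divide_left_mono) auto
    then show "4 * C * a / \<psi> s \<le> 8 * C * a / \<psi> a" by simp
  qed
  finally show ?thesis .
qed

lemma B_condition_if_Tpsi_dstar_upper_estimate:
  assumes q: "quasiconcave R \<psi>" and C: "0 < C" and est: "Tpsi_dstar_upper_estimate R \<psi> C"
  shows "B_condition R \<psi>"
  unfolding B_condition_iff[OF q]
proof (intro exI[of _ "8 * C + 1"] conjI ballI)
  fix a assume a: "a \<in> Ioo0 R"
  have a0: "0 < a" and aR: "ereal a < R" using a by (auto simp: Ioo0_def)
  have pa: "0 < \<psi> a" using quasiconcave_pos[OF q a] .
  have "recip_integral \<psi> (a/2) \<le> ennreal (8 * C * a / \<psi> a)"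
    unfolding recip_integral_def
    using a0 aR recip_integral_Ioo_le[OF q C est a]
    by (intro set_nn_integral_Ioo_le_of_tails borel_measurable_recip_indicator[OF q, of a]) auto
  moreover have "recip_integral \<psi> a \<le> recip_integral \<psi> (a/2) + ennreal (2 * (a - a/2) / \<psi> a)"
    using a0 aR by (intro recip_integral_le_add_tail[OF q]) auto
  ultimately have "recip_integral \<psi> a \<le> ennreal (8 * C * a / \<psi> a) + ennreal (2 * (a - a/2) / \<psi> a)"
    by (meson add_right_mono order_trans)
  also have "\<dots> = ennreal ((8 * C + 1) * a / \<psi> a)"
    using a0 pa C by (simp add: ennreal_plus[symmetric] field_simps del: ennreal_plus)
  finally show "recip_integral \<psi> a \<le> ennreal ((8 * C + 1) * a / \<psi> a)" .
qed (use C in simp)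

lemma dstar_Tpsi_estimate_if_B_condition:
  assumes q: "quasiconcave R \<psi>" and "B_condition R \<psi>"
  shows "\<exists>C>0. dstar_Tpsi_estimate R \<psi> C"
proof -
  obtain K where K: "0 < K" and B: "\<forall>t\<in>Ioo0 R. recip_integral \<psi> t \<le> ennreal (K * t / \<psi> t)"
    using assms B_condition_iff by blast
  then have "dstar_Tpsi_estimate R \<psi> (4 * K)"
    unfolding dstar_Tpsi_estimate_def using dstar_Tpsi_le[OF q K B] by blast
  then show ?thesis using K by (intro exI[of _ "4 * K"]) simp
qed

lemma Tpsi_dstar_estimate_if_B_condition:
  assumes q: "quasiconcave R \<psi>" and "B_condition R \<psi>"
  shows "\<exists>c C. 0 < c \<and> c \<le> C \<and> Tpsi_dstar_estimate R \<psi> c C"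
proof -
  obtain K where K: "0 < K" and B: "\<forall>t\<in>Ioo0 R. recip_integral \<psi> t \<le> ennreal (K * t / \<psi> t)"
    using assms B_condition_iff by blast
  then have "Tpsi_dstar_estimate R \<psi> (1/4) (1 + K)"
    unfolding Tpsi_dstar_estimate_def using Tpsi_dstar_ge[OF q] Tpsi_dstar_le[OF q K B] by blast
  then show ?thesis using K by (intro exI[of _ "1/4"] exI[of _ "1 + K"]) simp
qed

theorem lemma4p1:
  fixes R :: ereal and \<psi> :: "real \<Rightarrow> real"
  assumes "0 < R" and "quasiconcave R \<psi>"
  shows "((\<exists>C>0. \<forall>f :: real \<Rightarrow> real. f \<in> borel_measurable (restrict_space lebesgue (Ioo0 R)) \<longrightarrow>
             (\<forall>t \<in> Ioo0 R.
               dstar R (Tpsi R \<psi> (\<lambda>x. ennreal \<bar>f x\<bar>)) t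
                 \<le> ennreal C * (Tpsi R \<psi> (\<lambda>x. ennreal \<bar>f x\<bar>) t + dstar R (\<lambda>x. ennreal \<bar>f x\<bar>) t)))
          \<longleftrightarrow> B_condition R \<psi>)
       \<and> ((\<exists>c C. 0 < c \<and> c \<le> C \<and> (\<forall>f :: real \<Rightarrow> real. f \<in> borel_measurable (restrict_space lebesgue (Ioo0 R)) \<longrightarrow>
             (\<forall>t \<in> Ioo0 R.
               ennreal c * (Tpsi R \<psi> (\<lambda>x. ennreal \<bar>f x\<bar>) t + dstar R (\<lambda>x. ennreal \<bar>f x\<bar>) t)
                 \<le> Tpsi R \<psi> (dstar R (\<lambda>x. ennreal \<bar>f x\<bar>)) t
               \<and> Tpsi R \<psi> (dstar R (\<lambda>x. ennreal \<bar>f x\<bar>)) t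
                 \<le> ennreal C * (Tpsi R \<psi> (\<lambda>x. ennreal \<bar>f x\<bar>) t + dstar R (\<lambda>x. ennreal \<bar>f x\<bar>) t))))
          \<longleftrightarrow> B_condition R \<psi>)"
  unfolding dstar_Tpsi_estimate_def[symmetric] Tpsi_dstar_estimate_def[symmetric]
proof
  note q = \<open>quasiconcave R \<psi>\<close>
  show "(\<exists>C>0. dstar_Tpsi_estimate R \<psi> C) \<longleftrightarrow> B_condition R \<psi>"
    using B_condition_if_dstar_Tpsi_estimate[OF q] dstar_Tpsi_estimate_if_B_condition[OF q] by blast
  show "(\<exists>c C. 0 < c \<and> c \<le> C \<and> Tpsi_dstar_estimate R \<psi> c C) \<longleftrightarrow> B_condition R \<psi>"
    using B_condition_if_Tpsi_dstar_upper_estimate[OF q] Tpsi_dstar_upper_estimate_if_estimate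
      Tpsi_dstar_estimate_if_B_condition[OF q]
    by (meson order.strict_trans2)
qed

end
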